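(* Let $\epsilon_1,\epsilon_2$ be independent random variables with the unit Fréchet distribution, $\mathbb P(\epsilon_j\le x)=\exp(-1/x)$ for $x>0$, and fix $c>0$. Define $X_1=\epsilon_1$ and $X_2=\max(cX_1,\epsilon_2)$. For $j=1,2$ let $F_j$ be the (continuous) distribution function of $X_j$, let $Y_j=1/(1-F_j(X_j))$ (so $Y_j$ is exactly unit Pareto), and for a threshold $u>1$ let $Z_j=\log Y_j-\log u$. Let $\mathcal H=\{h:\mathbb R\to\mathbb R,\ h(z)=\max(z,c')+d \text{ for some } c',d\in\mathbb R\}$ and, for $i\neq j$, $$R^\star_{j\mid i}(u)=\inf_{h\in\mathcal H}\mathbb E\big[\,|Z_j-h(Z_i)|\;\big|\;Z_i>0\big].$$ Then $R^\star_{2\mid 1}(u)\to 0$ as $u\to\infty$, while $$\liminf_{u\to\infty}R^\star_{1\mid 2}(u)\ \ge\ \frac{\log 2}{c+1}>0 .$$ In particular $R^\star_{2\mid 1}(u)<R^\star_{1\mid 2}(u)$ for all sufficiently large $u$.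
   Context: $\mathcal H$ is the class of (bivariate) max-linear envelope predictors; $R^\star_{j\mid i}(u)$ is the tail prediction risk of $Z_j$ from $Z_i$ at threshold $u$. *)

theory Defs
  imports "HOL-Probability.Probability"
begin

definition cdf_of :: "'a measure \<Rightarrow> ('a \<Rightarrow> real) \<Rightarrow> real \<Rightarrow> real" where
  "cdf_of M X x = measure M {\<omega> \<in> space M. X \<omega> \<le> x}"

definition pareto_std :: "'a measure \<Rightarrow> ('a \<Rightarrow> real) \<Rightarrow> 'a \<Rightarrow> real" where
  "pareto_std M X \<omega> = 1 / (1 - cdf_of M X (X \<omega>))"

definition tail_Z :: "'a measure \<Rightarrow> ('a \<Rightarrow> real) \<Rightarrow> real \<Rightarrow> 'a \<Rightarrow> real" where
  "tail_Z M X u \<omega> = ln (pareto_std M X \<omega>) - ln u"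

definition envelope_class :: "(real \<Rightarrow> real) set" where
  "envelope_class = {h. \<exists>c' d. h = (\<lambda>z. max z c' + d)}"

text \<open>Tail prediction risk: inf over h of E[|Zj - h(Zi)| | Zi > 0]
  = E[|Zj - h(Zi)| 1{Zi>0}] / P(Zi > 0), computed in ennreal.\<close>
definition tail_risk :: "'a measure \<Rightarrow> ('a \<Rightarrow> real) \<Rightarrow> ('a \<Rightarrow> real) \<Rightarrow> ennreal" where
  "tail_risk M Zj Zi =
     (INF h\<in>envelope_class.
        (\<integral>\<^sup>+ \<omega>. ennreal \<bar>Zj \<omega> - h (Zi \<omega>)\<bar> * indicator {\<omega> \<in> space M. Zi \<omega> > 0} \<omega> \<partial>M)
        / emeasure M {\<omega> \<in> space M. Zi \<omega> > 0})"

end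

theory Submission
  imports Defs "HOL-Real_Asymp.Real_Asymp"
begin

(* Both margins are Frechet: X1 = e1 has cdf exp (-1/x) and, by independence, X2 = max (c e1) e2
   has cdf exp (-(c+1)/x). For a Frechet variable X of scale a, Z = g (X/a) - ln u, where
   g = frechet_log_pareto satisfies ln z <= g z <= ln z + 1/z, and Z > 0 iff X > a s with
   s = frechet_return_level u >= u - 1.

   Given Z1 > 0, X2 = c e1 unless e2 is larger still, so the envelope predictor
   max z 0 + ln (c/(c+1)) errs by O(1/s) plus the log-excess of e2 over c s, whose
   conditional mean is again O(1/s). Hence R21 = O(1/u).

   Given Z2 > 0, two events have conditional probability bounded below: X2 = c e1 with e1 just
   above its threshold (so Z1 > 0), and X2 = e2 with e1 <= 1 (so Z1 <= 1 - ln u). On both,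
   Z2 lies in (0, ln 2 + 1], so no envelope predictor fits both, and R12 grows like ln u; in
   particular it tends to infinity, which is stronger than the stated liminf bound. *)

definition frechet_log_pareto :: "real \<Rightarrow> real" where
  "frechet_log_pareto z = - ln (1 - exp (- 1 / z))"

definition frechet_return_level :: "real \<Rightarrow> real" where
  "frechet_return_level u = - 1 / ln (1 - 1 / u)"

lemma frechet_log_pareto_ge_ln:
  assumes "0 < z"
  shows "ln z \<le> frechet_log_pareto z"
proof -
  have "1 - exp (- 1 / z) \<le> 1 / z"
    using exp_ge_add_one_self[of "- 1 / z"] by simp
  moreover have "0 < 1 - exp (- 1 / z)"
    using assms by simp
  ultimately have "ln (1 - exp (- 1 / z)) \<le> ln (1 / z)"
    by simp
  then show ?thesis
    using assms by (simp add: frechet_log_pareto_def ln_div)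
qed

lemma frechet_log_pareto_le:
  assumes "0 < z"
  shows "frechet_log_pareto z \<le> ln z + 1 / z"
proof -
  have "1 + 1 / z \<le> exp (1 / z)"
    by (rule exp_ge_add_one_self)
  then have "1 / (z + 1) \<le> 1 - exp (- 1 / z)"
    using assms by (simp add: exp_minus field_simps)
  then have "ln (1 / (z + 1)) \<le> ln (1 - exp (- 1 / z))"
    using assms by (subst ln_le_cancel_iff) auto
  then have "frechet_log_pareto z \<le> ln (z + 1)"
    using assms by (simp add: frechet_log_pareto_def ln_div)
  also have "ln (z + 1) = ln z + ln (1 + 1 / z)"
    using assms by (simp add: ln_div field_simps)
  also have "ln (1 + 1 / z) \<le> 1 / z"
    using assms by (intro ln_add_one_self_le_self) simp
  finally show ?thesis
    by simp
qed

lemma frechet_log_pareto_less: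
  assumes "0 < y" "y < z"
  shows "frechet_log_pareto y < frechet_log_pareto z"
proof -
  have "exp (- 1 / y) < exp (- 1 / z)"
    using assms by (simp add: field_simps)
  moreover have "0 < 1 - exp (- 1 / z)"
    using assms by simp
  ultimately have "ln (1 - exp (- 1 / z)) < ln (1 - exp (- 1 / y))"
    using assms by (intro ln_less_cancel_iff[THEN iffD2]) auto
  then show ?thesis
    by (simp add: frechet_log_pareto_def)
qed

lemma
  assumes "1 < u"
  shows frechet_return_level_pos: "0 < frechet_return_level u"
    and exp_frechet_return_level: "exp (- 1 / frechet_return_level u) = 1 - 1 / u"
    and frechet_return_level_ge: "u - 1 \<le> frechet_return_level u"
    and frechet_return_level_le: "frechet_return_level u \<le> u"
    and frechet_log_pareto_return_level: "frechet_log_pareto (frechet_return_level u) = ln u"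
proof -
  have p: "0 < 1 - 1 / u" "1 - 1 / u < 1"
    using assms by (auto simp: field_simps)
  then have ln_neg: "ln (1 - 1 / u) < 0"
    by simp
  show "0 < frechet_return_level u"
    using ln_neg by (simp add: frechet_return_level_def)
  show exp_eq: "exp (- 1 / frechet_return_level u) = 1 - 1 / u"
    using p by (simp add: frechet_return_level_def)
  have "ln (1 - 1 / u) \<le> - 1 / u"
    using ln_le_minus_one[of "1 - 1 / u"] p by simp
  then show "frechet_return_level u \<le> u"
    using assms ln_neg by (simp add: frechet_return_level_def field_simps)
  have "- ln (1 - 1 / u) = ln (u / (u - 1))"
    using assms by (simp add: ln_div field_simps)
  also have "\<dots> \<le> u / (u - 1) - 1"
    using assms by (intro ln_le_minus_one) auto
  also have "\<dots> = 1 / (u - 1)"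
    using assms by (simp add: field_simps)
  finally show "u - 1 \<le> frechet_return_level u"
    using assms ln_neg by (simp add: frechet_return_level_def field_simps)
  show "frechet_log_pareto (frechet_return_level u) = ln u"
    using exp_eq assms by (simp add: frechet_log_pareto_def ln_div)
qed

lemma frechet_return_level_ge_1:
  assumes "2 \<le> u"
  shows "1 \<le> frechet_return_level u"
  using frechet_return_level_ge[of u] assms by simp

lemma ln_max_ratio_le:
  fixes c s x y :: real
  assumes "0 < c" "0 < s" "s < x"
  shows "ln (max (c * x) y / (c * x)) \<le> (if c * s < y then ln (y / (c * s)) else 0)"
proof (cases "y \<le> c * x")
  case True
  have "0 < c * x"
    using assms mult_pos_pos[of c x] by linarith
  then have "max (c * x) y / (c * x) = 1"
    using True by (auto simp: max_absorb1 zero_less_mult_iff)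
  moreover have "0 \<le> (if c * s < y then ln (y / (c * s)) else 0)"
    using assms by simp
  ultimately show ?thesis
    by simp
next
  case False
  have "c * s < c * x"
    using assms by simp
  then have y: "c * s < y" "0 < y"
    using False mult_pos_pos[of c s] assms by linarith+
  moreover have "y / (c * x) \<le> y / (c * s)"
    using assms y by (intro divide_left_mono) auto
  ultimately show ?thesis
    using False assms by simp
qed

lemma frechet_log_pareto_max_deviation:
  assumes "0 < c" "0 < s" "s < x"
  shows "\<bar>frechet_log_pareto (max (c * x) y / (c + 1)) - frechet_log_pareto x - ln (c / (c + 1))\<bar>
    \<le> (c + 1) / (c * s) + (if c * s < y then ln (y / (c * s)) else 0)"
proof -
  define k where "k = c / (c + 1)"
  define z where "z = max (c * x) y / (c + 1)"
  have pos: "0 < x" "0 < k" "0 < k * x" "k \<le> 1"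
    using assms by (auto simp: k_def)
  have "k * x \<le> z"
    using assms by (simp add: k_def z_def divide_right_mono)
  then have "0 < z"
    using pos(3) by linarith
  have "ln (k * x) \<le> ln z" "1 / z \<le> 1 / (k * x)"
    using pos(3) \<open>0 < z\<close> \<open>k * x \<le> z\<close> by (simp_all add: frac_le)
  have "ln (k * x) = ln k + ln x"
    using pos by (simp add: ln_mult)
  have "1 / (k * x) \<le> 1 / (k * s)"
    using assms pos by (intro divide_left_mono mult_left_mono) auto
  then have "1 / (k * x) \<le> (c + 1) / (c * s)"
    by (simp add: k_def)
  moreover have "1 / x \<le> 1 / (k * x)"
    using pos by (simp add: field_simps)
  moreover have "ln z = ln (max (c * x) y / (c * x)) + ln k + ln x"
  proof -
    have "z / (k * x) = max (c * x) y / (c * x)"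
      using assms by (simp add: z_def k_def)
    moreover have "ln z = ln (z / (k * x)) + ln k + ln x"
      using pos \<open>0 < z\<close> by (simp add: ln_div ln_mult)
    ultimately show ?thesis
      by simp
  qed
  moreover note ln_max_ratio_le[OF assms, of y]
    frechet_log_pareto_ge_ln[OF \<open>0 < z\<close>] frechet_log_pareto_le[OF \<open>0 < z\<close>]
    frechet_log_pareto_ge_ln[OF pos(1)] frechet_log_pareto_le[OF pos(1)]
  moreover have "0 \<le> (if c * s < y then ln (y / (c * s)) else 0)"
    using assms by simp
  ultimately have "\<bar>frechet_log_pareto z - frechet_log_pareto x - ln k\<bar>
      \<le> (c + 1) / (c * s) + (if c * s < y then ln (y / (c * s)) else 0)"
    using \<open>ln (k * x) \<le> ln z\<close> \<open>ln (k * x) = ln k + ln x\<close> \<open>1 / z \<le> 1 / (k * x)\<close>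
    by (simp only: abs_le_iff) linarith
  then show ?thesis
    by (simp add: z_def k_def)
qed

lemma ln_excess_le_suminf:
  assumes "0 < r"
  shows "ennreal (if r < y then ln (y / r) else 0)
    \<le> (\<Sum>n. of_bool (r * exp (real n) < y))"
proof (cases "r < y")
  case True
  define N where "N = nat \<lceil>ln (y / r)\<rceil>"
  have "r * exp (real n) < y" if "n < N" for n
  proof -
    have "int n < \<lceil>ln (y / r)\<rceil>"
      using that by (simp add: N_def)
    then have "real n < ln (y / r)"
      by (simp add: less_ceiling_iff)
    then have "exp (real n) < exp (ln (y / r))"
      by simp
    then have "exp (real n) < y / r"
      using True assms by simp
    then show ?thesis
      using assms by (simp add: field_simps)
  qed
  then have "(\<Sum>n<N. of_bool (r * exp (real n) < y) :: ennreal) = ennreal (real N)"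
    by (simp add: ennreal_of_nat_eq_real_of_nat[symmetric])
  moreover have "ennreal (ln (y / r)) \<le> ennreal (real N)"
    unfolding N_def by (intro ennreal_leI) linarith
  moreover have "(\<Sum>n<N. of_bool (r * exp (real n) < y) :: ennreal)
      \<le> (\<Sum>n. of_bool (r * exp (real n) < y))"
    by (intro sum_le_suminf) auto
  ultimately show ?thesis
    using True by (simp del: ennreal_le_iff)
qed simp

lemma suminf_ennreal_div_exp:
  assumes "0 \<le> b"
  shows "(\<Sum>n. ennreal (b / exp (real n))) = ennreal (b / (1 - exp (- 1)))"
proof -
  have "b / exp (real n) = b * exp (- 1) ^ n" for n :: nat
    by (simp add: exp_of_nat_mult[symmetric] exp_minus field_simps)
  moreover have "summable (\<lambda>n. b * exp (- 1 :: real) ^ n)"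
    by (intro summable_mult summable_geometric) simp
  ultimately show ?thesis
    using assms by (simp add: suminf_ennreal2 suminf_mult suminf_geometric)
qed

lemma tail_risk_le:
  assumes "h \<in> envelope_class" "emeasure M {\<omega> \<in> space M. 0 < Zi \<omega>} = ennreal p" "0 < p"
    and "(\<integral>\<^sup>+ \<omega>. ennreal \<bar>Zj \<omega> - h (Zi \<omega>)\<bar> * indicator {\<omega> \<in> space M. 0 < Zi \<omega>} \<omega> \<partial>M)
      \<le> R * ennreal p"
  shows "tail_risk M Zj Zi \<le> R"
proof -
  have "tail_risk M Zj Zi \<le> R * ennreal p / ennreal p"
    unfolding tail_risk_def assms(2)
    by (rule INF_lower2[OF assms(1)]) (rule divide_right_mono_ennreal[OF assms(4)])
  also have "\<dots> = R"
    using assms(3) by (simp add: mult_divide_eq_ennreal)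
  finally show ?thesis .
qed

lemma tail_risk_ge:
  assumes "emeasure M {\<omega> \<in> space M. 0 < Zi \<omega>} = ennreal p" "0 < p"
    and "\<And>h. h \<in> envelope_class \<Longrightarrow> ennreal (p * r)
      \<le> (\<integral>\<^sup>+ \<omega>. ennreal \<bar>Zj \<omega> - h (Zi \<omega>)\<bar> * indicator {\<omega> \<in> space M. 0 < Zi \<omega>} \<omega> \<partial>M)"
  shows "ennreal r \<le> tail_risk M Zj Zi"
proof (cases "0 \<le> r")
  case True
  then have "ennreal r = ennreal (p * r) / ennreal p"
    using assms(2) by (simp add: divide_ennreal)
  then show ?thesis
    unfolding tail_risk_def using assms by (auto intro!: INF_greatest divide_right_mono_ennreal)
qed (simp add: ennreal_neg)

locale frechet_rv = prob_space M for M :: "'a measure" +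
  fixes X :: "'a \<Rightarrow> real" and a :: real
  assumes measurable_X[measurable]: "X \<in> borel_measurable M"
    and scale_pos: "0 < a"
    and cdf_X: "\<And>x. 0 < x \<Longrightarrow> cdf_of M X x = exp (- a / x)"
begin

lemma cdf_mono: "x \<le> y \<Longrightarrow> cdf_of M X x \<le> cdf_of M X y"
  unfolding cdf_of_def by (intro finite_measure_mono) auto

lemma prob_greater:
  assumes "0 < r"
  shows "prob {\<omega> \<in> space M. r < X \<omega>} = 1 - exp (- a / r)"
proof -
  have "{\<omega> \<in> space M. r < X \<omega>} = space M - {\<omega> \<in> space M. X \<omega> \<le> r}"
    by auto
  then show ?thesis
    using prob_compl[of "{\<omega> \<in> space M. X \<omega> \<le> r}"] cdf_X[OF assms]
    by (simp add: cdf_of_def)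
qed

lemma prob_greater_le:
  assumes "0 < r"
  shows "prob {\<omega> \<in> space M. r < X \<omega>} \<le> a / r"
  using prob_greater[OF assms] exp_ge_add_one_self[of "- a / r"] by simp

lemma prob_interval:
  assumes "0 < r" "r \<le> r'"
  shows "prob {\<omega> \<in> space M. r < X \<omega> \<and> X \<omega> \<le> r'} = exp (- a / r') - exp (- a / r)"
proof -
  have "{\<omega> \<in> space M. r < X \<omega> \<and> X \<omega> \<le> r'} =
      {\<omega> \<in> space M. X \<omega> \<le> r'} - {\<omega> \<in> space M. X \<omega> \<le> r}"
    by auto
  moreover have "prob ({\<omega> \<in> space M. X \<omega> \<le> r'} - {\<omega> \<in> space M. X \<omega> \<le> r}) =
      cdf_of M X r' - cdf_of M X r"
    unfolding cdf_of_def using assms(2) by (intro finite_measure_Diff) auto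
  ultimately show ?thesis
    using assms cdf_X by simp
qed

lemma prob_doubling_interval_ge:
  assumes "0 < r"
  shows "a / (2 * r) * exp (- a / r) \<le> prob {\<omega> \<in> space M. r < X \<omega> \<and> X \<omega> \<le> 2 * r}"
proof -
  define w where "w = a / (2 * r)"
  have "exp (- 2 * w) * (1 + w) \<le> exp (- 2 * w) * exp w"
    by (intro mult_left_mono) auto
  also have "\<dots> = exp (- w)"
    by (simp flip: exp_add)
  finally have "w * exp (- 2 * w) \<le> exp (- w) - exp (- 2 * w)"
    by (simp add: algebra_simps)
  moreover have "- 2 * w = - a / r" "- w = - a / (2 * r)"
    using assms by (simp_all add: w_def)
  ultimately show ?thesis
    using prob_interval[of r "2 * r"] assms by (simp add: w_def)
qed

lemma tail_Z_eq:
  assumes "0 < X \<omega>"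
  shows "tail_Z M X u \<omega> = frechet_log_pareto (X \<omega> / a) - ln u"
  using cdf_X[OF assms] scale_pos
  by (simp add: tail_Z_def pareto_std_def frechet_log_pareto_def ln_div)

lemma tail_Z_pos_iff:
  assumes "1 < u"
  shows "0 < tail_Z M X u \<omega> \<longleftrightarrow> a * frechet_return_level u < X \<omega>"
proof (cases "a * frechet_return_level u < X \<omega>")
  case True
  have "0 < X \<omega>"
    using True mult_pos_pos[OF scale_pos frechet_return_level_pos[OF assms]] by linarith
  moreover have "frechet_log_pareto (frechet_return_level u) < frechet_log_pareto (X \<omega> / a)"
    using True scale_pos frechet_return_level_pos[OF assms]
    by (intro frechet_log_pareto_less) (auto simp: field_simps)
  ultimately show ?thesis
    using True tail_Z_eq frechet_log_pareto_return_level[OF assms] by simp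
next
  case False
  have "cdf_of M X (X \<omega>) \<le> cdf_of M X (a * frechet_return_level u)"
    using False by (intro cdf_mono) simp
  also have "\<dots> = 1 - 1 / u"
    using cdf_X scale_pos frechet_return_level_pos[OF assms] exp_frechet_return_level[OF assms]
    by simp
  finally have "1 / u \<le> 1 - cdf_of M X (X \<omega>)"
    by simp
  moreover have "0 < 1 / u"
    using assms by simp
  ultimately have "0 < 1 - cdf_of M X (X \<omega>)" "1 \<le> u * (1 - cdf_of M X (X \<omega>))"
    using assms by (linarith, simp add: divide_le_eq mult.commute)
  then have "pareto_std M X \<omega> \<le> u" "0 < pareto_std M X \<omega>"
    unfolding pareto_std_def by (auto simp: divide_le_eq mult.commute)
  then show ?thesis
    using False by (simp add: tail_Z_def)
qed

lemma prob_greater_return_level: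
  assumes "1 < u"
  shows "prob {\<omega> \<in> space M. a * frechet_return_level u < X \<omega>} = 1 / u"
  using prob_greater[of "a * frechet_return_level u"] scale_pos
    frechet_return_level_pos[OF assms] exp_frechet_return_level[OF assms]
  by simp

lemma emeasure_tail_Z_pos:
  assumes "1 < u"
  shows "emeasure M {\<omega> \<in> space M. 0 < tail_Z M X u \<omega>} = ennreal (1 / u)"
  using prob_greater_return_level[OF assms]
  by (simp add: tail_Z_pos_iff[OF assms] emeasure_eq_measure)

lemma tail_Z_le_ln2_plus_one:
  assumes "2 \<le> u" "a * frechet_return_level u < X \<omega>" "X \<omega> \<le> 2 * (a * frechet_return_level u)"
  shows "tail_Z M X u \<omega> \<le> ln 2 + 1"
proof -
  define s where "s = frechet_return_level u"
  define z where "z = X \<omega> / a"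
  have s: "1 \<le> s" "frechet_log_pareto s = ln u"
    using frechet_return_level_ge_1[OF assms(1)] frechet_log_pareto_return_level[of u] assms(1)
    by (simp_all add: s_def)
  have z: "s < z" "z \<le> 2 * s"
    using assms(2,3) scale_pos by (auto simp: z_def s_def field_simps)
  have "frechet_log_pareto z \<le> ln z + 1 / z"
    using s z by (intro frechet_log_pareto_le) simp
  also have "ln z \<le> ln (2 * s)"
    using s z by simp
  also have "\<dots> = ln 2 + ln s"
    using s by (simp add: ln_mult)
  also have "ln s \<le> ln u"
    using frechet_log_pareto_ge_ln[of s] s by simp
  also have "1 / z \<le> 1"
    using s z by simp
  finally have "frechet_log_pareto z \<le> ln 2 + ln u + 1"
    by simp
  moreover have "0 < X \<omega>"
    using s z scale_pos zero_less_divide_iff[of "X \<omega>" a] by (simp add: z_def[symmetric])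
  ultimately show ?thesis
    using tail_Z_eq[of \<omega> u] by (simp add: z_def)
qed

end

locale frechet_max_model = prob_space M for M :: "'a measure" +
  fixes e1 e2 :: "'a \<Rightarrow> real" and c :: real
  assumes measurable_e1[measurable]: "e1 \<in> borel_measurable M"
    and measurable_e2[measurable]: "e2 \<in> borel_measurable M"
    and indep: "indep_var borel e1 borel e2"
    and distr_e1: "\<forall>x>0. measure M {\<omega> \<in> space M. e1 \<omega> \<le> x} = exp (- 1 / x)"
    and distr_e2: "\<forall>x>0. measure M {\<omega> \<in> space M. e2 \<omega> \<le> x} = exp (- 1 / x)"
    and c_pos: "0 < c"
begin

definition X2 :: "'a \<Rightarrow> real" where
  "X2 = (\<lambda>\<omega>. max (c * e1 \<omega>) (e2 \<omega>))"

lemma measurable_X2[measurable]: "X2 \<in> borel_measurable M"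
  unfolding X2_def by measurable

sublocale e1: frechet_rv M e1 1
  using distr_e1 by unfold_locales (auto simp: cdf_of_def)

sublocale e2: frechet_rv M e2 1
  using distr_e2 by unfold_locales (auto simp: cdf_of_def)

lemma prob_indep:
  assumes "A \<in> sets borel" "B \<in> sets borel"
  shows "prob {\<omega> \<in> space M. e1 \<omega> \<in> A \<and> e2 \<omega> \<in> B}
    = prob {\<omega> \<in> space M. e1 \<omega> \<in> A} * prob {\<omega> \<in> space M. e2 \<omega> \<in> B}"
proof -
  have "{\<omega> \<in> space M. e1 \<omega> \<in> A \<and> e2 \<omega> \<in> B} = (\<lambda>\<omega>. (e1 \<omega>, e2 \<omega>)) -` (A \<times> B) \<inter> space M"
    "{\<omega> \<in> space M. e1 \<omega> \<in> A} = e1 -` A \<inter> space M"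
    "{\<omega> \<in> space M. e2 \<omega> \<in> B} = e2 -` B \<inter> space M"
    by auto
  then show ?thesis
    using indep_varD[OF indep assms] by simp
qed

lemma cdf_X2:
  assumes "0 < x"
  shows "cdf_of M X2 x = exp (- (c + 1) / x)"
proof -
  have "{\<omega> \<in> space M. X2 \<omega> \<le> x} = {\<omega> \<in> space M. e1 \<omega> \<in> {..x / c} \<and> e2 \<omega> \<in> {..x}}"
    using c_pos by (auto simp: X2_def field_simps)
  then have "cdf_of M X2 x = cdf_of M e1 (x / c) * cdf_of M e2 x"
    using prob_indep[of "{..x / c}" "{..x}"] by (simp add: cdf_of_def)
  also have "\<dots> = exp (- c / x + - 1 / x)"
    using assms c_pos e1.cdf_X e2.cdf_X by (simp add: exp_add[symmetric])
  finally show ?thesis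
    by (simp add: add_divide_distrib[symmetric] algebra_simps)
qed

sublocale X2: frechet_rv M X2 "c + 1"
  using c_pos cdf_X2 by unfold_locales auto

lemma prob_e1_e2_greater_le:
  assumes "1 < u" "0 < r"
  shows "prob {\<omega> \<in> space M. frechet_return_level u < e1 \<omega> \<and> r < e2 \<omega>} \<le> 1 / u * (1 / r)"
proof -
  have "prob {\<omega> \<in> space M. frechet_return_level u < e1 \<omega> \<and> r < e2 \<omega>}
      = prob {\<omega> \<in> space M. frechet_return_level u < e1 \<omega>} * prob {\<omega> \<in> space M. r < e2 \<omega>}"
    using prob_indep[of "{frechet_return_level u<..}" "{r<..}"] by simp
  also have "\<dots> = 1 / u * prob {\<omega> \<in> space M. r < e2 \<omega>}"
    using e1.prob_greater_return_level[OF assms(1)] by simp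
  also have "\<dots> \<le> 1 / u * (1 / r)"
    using e2.prob_greater_le[OF assms(2)] assms(1) by (intro mult_left_mono) auto
  finally show ?thesis .
qed

lemma risk21_integrand_le:
  assumes "1 < u" "\<omega> \<in> space M"
  defines "s \<equiv> frechet_return_level u"
  defines "S \<equiv> {\<omega> \<in> space M. s < e1 \<omega>}"
  shows "ennreal \<bar>tail_Z M X2 u \<omega> - (max (tail_Z M e1 u \<omega>) 0 + ln (c / (c + 1)))\<bar>
      * indicator {\<omega> \<in> space M. 0 < tail_Z M e1 u \<omega>} \<omega>
    \<le> ennreal ((c + 1) / (c * s)) * indicator S \<omega>
      + (\<Sum>n. indicator (S \<inter> {\<omega> \<in> space M. c * s * exp (real n) < e2 \<omega>}) \<omega>)"
proof (cases "\<omega> \<in> S")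
  case False
  then show ?thesis
    using e1.tail_Z_pos_iff[OF assms(1)] by (simp add: S_def s_def)
next
  case True
  have s: "0 < s" "s < e1 \<omega>"
    using True frechet_return_level_pos[OF assms(1)] by (auto simp: S_def s_def)
  then have "0 < c * s"
    using c_pos by simp
  have "0 < X2 \<omega>"
    using s c_pos by (simp add: X2_def max.strict_coboundedI1)
  then have "tail_Z M X2 u \<omega> - (max (tail_Z M e1 u \<omega>) 0 + ln (c / (c + 1))) =
      frechet_log_pareto (max (c * e1 \<omega>) (e2 \<omega>) / (c + 1)) - frechet_log_pareto (e1 \<omega>)
      - ln (c / (c + 1))"
    using s e1.tail_Z_eq[of \<omega> u] X2.tail_Z_eq[of \<omega> u] e1.tail_Z_pos_iff[OF assms(1), of \<omega>]
    by (simp add: X2_def s_def)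
  then have "ennreal \<bar>tail_Z M X2 u \<omega> - (max (tail_Z M e1 u \<omega>) 0 + ln (c / (c + 1)))\<bar>
      \<le> ennreal ((c + 1) / (c * s)) + ennreal (if c * s < e2 \<omega> then ln (e2 \<omega> / (c * s)) else 0)"
    using frechet_log_pareto_max_deviation[OF c_pos s, of "e2 \<omega>"] c_pos s
    by (simp add: ennreal_plus[symmetric] del: ennreal_plus)
  also have "ennreal (if c * s < e2 \<omega> then ln (e2 \<omega> / (c * s)) else 0)
      \<le> (\<Sum>n. indicator (S \<inter> {\<omega> \<in> space M. c * s * exp (real n) < e2 \<omega>}) \<omega>)"
    using ln_excess_le_suminf[OF \<open>0 < c * s\<close>, of "e2 \<omega>"] True assms(2)
    by (simp add: indicator_def)
  finally show ?thesis
    using True e1.tail_Z_pos_iff[OF assms(1), of \<omega>] assms(2) by (simp add: S_def s_def)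
qed

lemma risk21_numerator_le:
  assumes "1 < u"
  defines "s \<equiv> frechet_return_level u"
  shows "(\<integral>\<^sup>+ \<omega>. ennreal \<bar>tail_Z M X2 u \<omega> - (max (tail_Z M e1 u \<omega>) 0 + ln (c / (c + 1)))\<bar>
        * indicator {\<omega> \<in> space M. 0 < tail_Z M e1 u \<omega>} \<omega> \<partial>M)
    \<le> ennreal ((c + 1 + 1 / (1 - exp (- 1))) / (c * s)) * ennreal (1 / u)"
proof -
  define S where "S = {\<omega> \<in> space M. s < e1 \<omega>}"
  define E where "E n = {\<omega> \<in> space M. c * s * exp (real n) < e2 \<omega>}" for n :: nat
  define C where "C = (c + 1) / (c * s)"
  have "0 < c * s"
    using frechet_return_level_pos[OF assms(1)] c_pos by (simp add: s_def)
  have [measurable]: "S \<in> sets M" "E n \<in> sets M" for n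
    by (simp_all add: S_def E_def)
  have "emeasure M S = ennreal (1 / u)"
    using e1.prob_greater_return_level[OF assms(1)] by (simp add: S_def s_def emeasure_eq_measure)
  have "emeasure M (S \<inter> E n) \<le> ennreal (1 / (c * s) / exp (real n)) * ennreal (1 / u)" for n
  proof -
    have "S \<inter> E n = {\<omega> \<in> space M. s < e1 \<omega> \<and> c * s * exp (real n) < e2 \<omega>}"
      by (auto simp: S_def E_def)
    then have "prob (S \<inter> E n) \<le> 1 / (c * s) / exp (real n) * (1 / u)"
      using prob_e1_e2_greater_le[OF assms(1), of "c * s * exp (real n)"] \<open>0 < c * s\<close>
      by (simp add: s_def mult.commute)
    then have "ennreal (prob (S \<inter> E n)) \<le> ennreal (1 / (c * s) / exp (real n) * (1 / u))"
      by (rule ennreal_leI)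
    also have "\<dots> = ennreal (1 / (c * s) / exp (real n)) * ennreal (1 / u)"
      using \<open>0 < c * s\<close> assms(1) by (intro ennreal_mult) auto
    finally show ?thesis
      unfolding emeasure_eq_measure .
  qed
  have geometric: "(\<Sum>n. ennreal (1 / (c * s) / exp (real n))) = ennreal (1 / (c * s) / (1 - exp (- 1)))"
    using \<open>0 < c * s\<close> by (intro suminf_ennreal_div_exp) simp
  have "(\<integral>\<^sup>+ \<omega>. ennreal \<bar>tail_Z M X2 u \<omega> - (max (tail_Z M e1 u \<omega>) 0 + ln (c / (c + 1)))\<bar>
        * indicator {\<omega> \<in> space M. 0 < tail_Z M e1 u \<omega>} \<omega> \<partial>M)
      \<le> (\<integral>\<^sup>+ \<omega>. ennreal C * indicator S \<omega> + (\<Sum>n. indicator (S \<inter> E n) \<omega>) \<partial>M)"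
    using risk21_integrand_le[OF assms(1)] by (intro nn_integral_mono) (simp add: S_def E_def C_def s_def)
  also have "\<dots> = ennreal C * emeasure M S + (\<Sum>n. emeasure M (S \<inter> E n))"
    by (simp add: nn_integral_add nn_integral_suminf nn_integral_cmult_indicator)
  also have "\<dots> \<le> ennreal C * ennreal (1 / u) + (\<Sum>n. ennreal (1 / (c * s) / exp (real n)) * ennreal (1 / u))"
    using \<open>emeasure M S = ennreal (1 / u)\<close> \<open>\<And>n. emeasure M (S \<inter> E n) \<le> _\<close>
    by (intro add_mono suminf_le) auto
  also have "\<dots> = (ennreal C + ennreal (1 / (c * s) / (1 - exp (- 1)))) * ennreal (1 / u)"
    by (simp only: ennreal_suminf_multc geometric distrib_right)
  also have "ennreal C + ennreal (1 / (c * s) / (1 - exp (- 1)))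
      = ennreal (C + 1 / (c * s) / (1 - exp (- 1)))"
    using \<open>0 < c * s\<close> c_pos by (intro ennreal_plus[symmetric]) (simp_all add: C_def)
  also have "C + 1 / (c * s) / (1 - exp (- 1)) = (c + 1 + 1 / (1 - exp (- 1))) / (c * s)"
    by (simp add: C_def add_divide_distrib)
  finally show ?thesis .
qed

lemma tail_risk21_le:
  assumes "1 < u"
  shows "tail_risk M (tail_Z M X2 u) (tail_Z M e1 u)
    \<le> ennreal ((c + 1 + 1 / (1 - exp (- 1))) / (c * frechet_return_level u))"
  using e1.emeasure_tail_Z_pos[OF assms] risk21_numerator_le[OF assms] assms
  by (intro tail_risk_le[where h = "\<lambda>z. max z 0 + ln (c / (c + 1))"]) (auto simp: envelope_class_def)

definition e1_driven_event :: "real \<Rightarrow> 'a set" where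
  "e1_driven_event u = {\<omega> \<in> space M.
     (c + 1) * frechet_return_level u < c * e1 \<omega> \<and> c * e1 \<omega> \<le> 2 * ((c + 1) * frechet_return_level u)
     \<and> e2 \<omega> \<le> (c + 1) * frechet_return_level u}"

definition e2_driven_event :: "real \<Rightarrow> 'a set" where
  "e2_driven_event u = {\<omega> \<in> space M. 1 / 2 < e1 \<omega> \<and> e1 \<omega> \<le> 1
     \<and> (c + 1) * frechet_return_level u < e2 \<omega> \<and> e2 \<omega> \<le> 2 * ((c + 1) * frechet_return_level u)}"

lemma X2_threshold_bounds:
  assumes "2 \<le> u"
  shows "c < (c + 1) * frechet_return_level u"
    and "2 * ((c + 1) * frechet_return_level u) \<le> 2 * ((c + 1) * u)"
proof -
  have "(c + 1) * 1 \<le> (c + 1) * frechet_return_level u"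
    using frechet_return_level_ge_1[OF assms] c_pos by (intro mult_left_mono) auto
  then show "c < (c + 1) * frechet_return_level u"
    by simp
  have "(c + 1) * frechet_return_level u \<le> (c + 1) * u"
    using frechet_return_level_le[of u] assms c_pos by (intro mult_left_mono) auto
  then show "2 * ((c + 1) * frechet_return_level u) \<le> 2 * ((c + 1) * u)"
    by linarith
qed

lemma tail_Z_on_e1_driven_event:
  assumes "2 \<le> u" "\<omega> \<in> e1_driven_event u"
  shows "0 < tail_Z M e1 u \<omega>" "0 < tail_Z M X2 u \<omega>" "tail_Z M X2 u \<omega> \<le> ln 2 + 1"
proof -
  define s where "s = frechet_return_level u"
  have ev: "(c + 1) * s < c * e1 \<omega>" "c * e1 \<omega> \<le> 2 * ((c + 1) * s)" "e2 \<omega> \<le> (c + 1) * s"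
    using assms(2) by (auto simp: e1_driven_event_def s_def)
  have "1 \<le> s"
    using frechet_return_level_ge_1[OF assms(1)] by (simp add: s_def)
  have "c * s < c * e1 \<omega>"
    using ev(1) \<open>1 \<le> s\<close> by (simp only: distrib_right mult_1)
  then show "0 < tail_Z M e1 u \<omega>"
    using e1.tail_Z_pos_iff[of u \<omega>] c_pos assms(1) by (simp add: s_def)
  have "X2 \<omega> = c * e1 \<omega>"
    using ev by (simp add: X2_def)
  then show "0 < tail_Z M X2 u \<omega>" "tail_Z M X2 u \<omega> \<le> ln 2 + 1"
    using X2.tail_Z_pos_iff[of u \<omega>] X2.tail_Z_le_ln2_plus_one[of u \<omega>] ev assms(1) by (simp_all add: s_def)
qed

lemma tail_Z_on_e2_driven_event:
  assumes "2 \<le> u" "\<omega> \<in> e2_driven_event u"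
  shows "tail_Z M e1 u \<omega> \<le> 1 - ln u" "0 < tail_Z M X2 u \<omega>" "tail_Z M X2 u \<omega> \<le> ln 2 + 1"
proof -
  define s where "s = frechet_return_level u"
  have ev: "1 / 2 < e1 \<omega>" "e1 \<omega> \<le> 1" "(c + 1) * s < e2 \<omega>" "e2 \<omega> \<le> 2 * ((c + 1) * s)"
    using assms(2) by (auto simp: e2_driven_event_def s_def)
  have "frechet_log_pareto (e1 \<omega>) \<le> frechet_log_pareto 1"
    using ev frechet_log_pareto_less[of "e1 \<omega>" 1] by (cases "e1 \<omega> = 1") auto
  also have "\<dots> \<le> 1"
    using frechet_log_pareto_le[of 1] by simp
  finally show "tail_Z M e1 u \<omega> \<le> 1 - ln u"
    using e1.tail_Z_eq[of \<omega> u] ev by simp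
  have "c * e1 \<omega> \<le> c"
    using ev c_pos by simp
  then have "X2 \<omega> = e2 \<omega>"
    using ev X2_threshold_bounds(1)[OF assms(1)] by (simp add: X2_def s_def)
  then show "0 < tail_Z M X2 u \<omega>" "tail_Z M X2 u \<omega> \<le> ln 2 + 1"
    using X2.tail_Z_pos_iff[of u \<omega>] X2.tail_Z_le_ln2_plus_one[of u \<omega>] ev assms(1) by (simp_all add: s_def)
qed

lemma prob_e1_driven_event_ge:
  assumes "2 \<le> u"
  shows "c / (4 * ((c + 1) * u)) \<le> prob (e1_driven_event u)"
proof -
  define s where "s = frechet_return_level u"
  define t where "t = (c + 1) * s"
  have "1 \<le> s" "s \<le> u" "exp (- 1 / s) = 1 - 1 / u"
    using frechet_return_level_ge_1[OF assms] frechet_return_level_le[of u]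
      exp_frechet_return_level[of u] assms by (simp_all add: s_def)
  then have "0 < t"
    using c_pos by (simp add: t_def)
  have "e1_driven_event u = {\<omega> \<in> space M. e1 \<omega> \<in> {t / c<..2 * (t / c)} \<and> e2 \<omega> \<in> {..t}}"
    using c_pos by (auto simp: e1_driven_event_def t_def s_def field_simps)
  then have "prob (e1_driven_event u)
      = prob {\<omega> \<in> space M. t / c < e1 \<omega> \<and> e1 \<omega> \<le> 2 * (t / c)} * exp (- 1 / t)"
    using prob_indep[of "{t / c<..2 * (t / c)}" "{..t}"] e2.cdf_X[OF \<open>0 < t\<close>]
    by (simp add: cdf_of_def)
  also have "\<dots> \<ge> 1 / (2 * (t / c)) * exp (- 1 / (t / c)) * exp (- 1 / t)"
    using \<open>0 < t\<close> c_pos by (intro mult_right_mono e1.prob_doubling_interval_ge) auto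
  also have "1 / (2 * (t / c)) * exp (- 1 / (t / c)) * exp (- 1 / t) = c / (2 * t) * exp (- 1 / s)"
  proof -
    have "- 1 / (t / c) + - 1 / t = - (c + 1) / t"
      using c_pos \<open>0 < t\<close> by (simp add: field_simps)
    also have "\<dots> = - 1 / s"
      unfolding t_def using c_pos by (smt (verit) minus_divide_left nonzero_divide_mult_cancel_left)
    finally have "- 1 / (t / c) + - 1 / t = - 1 / s" .
    then show ?thesis
      by (simp add: mult.assoc flip: exp_add)
  qed
  also have "\<dots> = c / (2 * t) * (1 - 1 / u)"
    using \<open>exp (- 1 / s) = 1 - 1 / u\<close> by simp
  also have "\<dots> \<ge> c / (2 * ((c + 1) * u)) * (1 / 2)"
    using c_pos \<open>0 < t\<close> X2_threshold_bounds(2)[OF assms] assms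
    by (intro mult_mono frac_le) (auto simp: t_def s_def)
  finally show ?thesis
    by simp
qed

lemma prob_e2_driven_event_ge:
  assumes "2 \<le> u"
  shows "exp (- 2) / (4 * ((c + 1) * u)) \<le> prob (e2_driven_event u)"
proof -
  define s where "s = frechet_return_level u"
  define t where "t = (c + 1) * s"
  have "1 \<le> s" "s \<le> u" "exp (- 1 / s) = 1 - 1 / u"
    using frechet_return_level_ge_1[OF assms] frechet_return_level_le[of u]
      exp_frechet_return_level[of u] assms by (simp_all add: s_def)
  then have "s \<le> t"
    using c_pos by (simp add: t_def)
  then have "0 < t"
    using \<open>1 \<le> s\<close> by simp
  have "e2_driven_event u = {\<omega> \<in> space M. e1 \<omega> \<in> {1 / 2<..2 * (1 / 2)} \<and> e2 \<omega> \<in> {t<..2 * t}}"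
    by (auto simp: e2_driven_event_def t_def s_def)
  have "1 / (2 * ((c + 1) * u)) \<le> 1 / (2 * t)"
    using \<open>0 < t\<close> X2_threshold_bounds(2)[OF assms] by (intro frac_le) (auto simp: t_def s_def)
  moreover have "1 / 2 \<le> exp (- 1 / t)"
  proof -
    have "- 1 / s \<le> - 1 / t"
      using \<open>s \<le> t\<close> \<open>1 \<le> s\<close> by (simp add: frac_le)
    then have "exp (- 1 / s) \<le> exp (- 1 / t)"
      by simp
    moreover have "1 / 2 \<le> 1 - 1 / u"
      using assms by (simp add: field_simps)
    ultimately show ?thesis
      using \<open>exp (- 1 / s) = 1 - 1 / u\<close> by linarith
  qed
  ultimately have "exp (- 2) * (1 / (2 * ((c + 1) * u)) * (1 / 2))
      \<le> exp (- 2) * (1 / (2 * t) * exp (- 1 / t))"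
    using \<open>0 < t\<close> by (intro mult_left_mono mult_mono) auto
  also have "\<dots> \<le> prob {\<omega> \<in> space M. 1 / 2 < e1 \<omega> \<and> e1 \<omega> \<le> 2 * (1 / 2)}
        * prob {\<omega> \<in> space M. t < e2 \<omega> \<and> e2 \<omega> \<le> 2 * t}"
    using e1.prob_doubling_interval_ge[of "1 / 2"] e2.prob_doubling_interval_ge[of t] \<open>0 < t\<close>
    by (intro mult_mono) auto
  also have "\<dots> = prob (e2_driven_event u)"
    using prob_indep[of "{1 / 2<..2 * (1 / 2)}" "{t<..2 * t}"] \<open>e2_driven_event u = _\<close> by simp
  finally show ?thesis
    by simp
qed

lemma sets_driven_events[measurable]: "e1_driven_event u \<in> sets M" "e2_driven_event u \<in> sets M"
  by (simp_all add: e1_driven_event_def e2_driven_event_def)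

lemma driven_events_disjoint:
  assumes "2 \<le> u"
  shows "e1_driven_event u \<inter> e2_driven_event u = {}"
proof -
  have "\<not> c * e1 \<omega> \<le> c" if "\<omega> \<in> e1_driven_event u" for \<omega>
    using that X2_threshold_bounds(1)[OF assms] by (auto simp: e1_driven_event_def)
  then show ?thesis
    using c_pos by (auto simp: e2_driven_event_def)
qed

lemma risk12_integrand_ge:
  fixes c' d :: real
  assumes "2 \<le> u"
  defines "m \<equiv> max 0 c' + d"
  shows "ennreal (max 0 (- (m + ln 2 + 1))) * indicator (e1_driven_event u) \<omega>
      + ennreal (max 0 (m - 1 + ln u)) * indicator (e2_driven_event u) \<omega>
    \<le> ennreal \<bar>tail_Z M e1 u \<omega> - (max (tail_Z M X2 u \<omega>) c' + d)\<bar>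
      * indicator {\<omega> \<in> space M. 0 < tail_Z M X2 u \<omega>} \<omega>"
proof -
  have envelope: "m \<le> max z c' + d" "max z c' + d \<le> m + z" if "0 < z" for z
    using that by (auto simp: m_def)
  have space: "\<omega> \<in> space M" if "\<omega> \<in> e1_driven_event u \<or> \<omega> \<in> e2_driven_event u"
    using that by (auto simp: e1_driven_event_def e2_driven_event_def)
  consider "\<omega> \<in> e1_driven_event u" | "\<omega> \<in> e2_driven_event u"
    | "\<omega> \<notin> e1_driven_event u" "\<omega> \<notin> e2_driven_event u"
    by blast
  then show ?thesis
  proof cases
    case 1
    note Z = tail_Z_on_e1_driven_event[OF assms(1) 1]
    have "\<omega> \<notin> e2_driven_event u"
      using 1 driven_events_disjoint[OF assms(1)] by blast
    moreover have "max 0 (- (m + ln 2 + 1)) \<le> \<bar>tail_Z M e1 u \<omega> - (max (tail_Z M X2 u \<omega>) c' + d)\<bar>"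
      using Z envelope(2)[of "tail_Z M X2 u \<omega>"] by simp
    ultimately show ?thesis
      using 1 Z space by (simp add: ennreal_leI)
  next
    case 2
    note Z = tail_Z_on_e2_driven_event[OF assms(1) 2]
    have "\<omega> \<notin> e1_driven_event u"
      using 2 driven_events_disjoint[OF assms(1)] by blast
    moreover have "max 0 (m - 1 + ln u) \<le> \<bar>tail_Z M e1 u \<omega> - (max (tail_Z M X2 u \<omega>) c' + d)\<bar>"
      using Z envelope(1)[of "tail_Z M X2 u \<omega>"] by simp
    ultimately show ?thesis
      using 2 Z space by (simp add: ennreal_leI)
  qed simp
qed

lemma tail_risk12_ge:
  assumes "2 \<le> u"
  shows "ennreal (min c (exp (- 2)) / (4 * (c + 1)) * (ln u - 2 - ln 2))
    \<le> tail_risk M (tail_Z M e1 u) (tail_Z M X2 u)"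
proof (rule tail_risk_ge)
  show "emeasure M {\<omega> \<in> space M. 0 < tail_Z M X2 u \<omega>} = ennreal (1 / u)" "0 < 1 / u"
    using X2.emeasure_tail_Z_pos[of u] assms by simp_all
  define p where "p = min c (exp (- 2)) / (4 * (c + 1))"
  define A where "A = e1_driven_event u"
  define B where "B = e2_driven_event u"
  have "p / u = min c (exp (- 2)) / (4 * ((c + 1) * u))"
    by (simp only: p_def divide_divide_eq_left mult.assoc)
  moreover have "min c (exp (- 2)) / (4 * ((c + 1) * u)) \<le> c / (4 * ((c + 1) * u))"
    "min c (exp (- 2)) / (4 * ((c + 1) * u)) \<le> exp (- 2) / (4 * ((c + 1) * u))"
    using c_pos assms by (simp_all add: divide_right_mono)
  ultimately have prob_ge: "p / u \<le> prob A" "p / u \<le> prob B"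
    using prob_e1_driven_event_ge[OF assms] prob_e2_driven_event_ge[OF assms]
    by (simp_all add: A_def B_def)
  fix h
  assume "h \<in> envelope_class"
  then obtain c' d where h: "h = (\<lambda>z. max z c' + d)"
    by (auto simp: envelope_class_def)
  define \<alpha> where "\<alpha> = max 0 (- (max 0 c' + d + ln 2 + 1))"
  define \<beta> where "\<beta> = max 0 (max 0 c' + d - 1 + ln u)"
  have "ln u - 2 - ln 2 \<le> \<alpha> + \<beta>" "0 \<le> \<alpha>" "0 \<le> \<beta>"
    by (auto simp: \<alpha>_def \<beta>_def)
  have "0 \<le> p / u"
    using c_pos assms by (simp add: p_def)
  have "1 / u * (p * (ln u - 2 - ln 2)) = p / u * (ln u - 2 - ln 2)"
    by simp
  also have "\<dots> \<le> p / u * (\<alpha> + \<beta>)"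
    using \<open>ln u - 2 - ln 2 \<le> \<alpha> + \<beta>\<close> \<open>0 \<le> p / u\<close> by (rule mult_left_mono)
  also have "\<dots> = \<alpha> * (p / u) + \<beta> * (p / u)"
    by (simp add: distrib_left mult.commute add_divide_distrib)
  also have "\<dots> \<le> \<alpha> * prob A + \<beta> * prob B"
    using prob_ge \<open>0 \<le> \<alpha>\<close> \<open>0 \<le> \<beta>\<close> by (intro add_mono mult_left_mono)
  finally have "ennreal (1 / u * (p * (ln u - 2 - ln 2))) \<le> ennreal (\<alpha> * prob A + \<beta> * prob B)"
    by (rule ennreal_leI)
  also have "\<dots> = ennreal \<alpha> * emeasure M A + ennreal \<beta> * emeasure M B"
    using \<open>0 \<le> \<alpha>\<close> \<open>0 \<le> \<beta>\<close> by (simp add: emeasure_eq_measure ennreal_mult)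
  also have "\<dots> = (\<integral>\<^sup>+ \<omega>. ennreal \<alpha> * indicator A \<omega> + ennreal \<beta> * indicator B \<omega> \<partial>M)"
    by (simp add: A_def B_def nn_integral_add nn_integral_cmult_indicator)
  also have "\<dots> \<le> (\<integral>\<^sup>+ \<omega>. ennreal \<bar>tail_Z M e1 u \<omega> - h (tail_Z M X2 u \<omega>)\<bar>
      * indicator {\<omega> \<in> space M. 0 < tail_Z M X2 u \<omega>} \<omega> \<partial>M)"
    using risk12_integrand_ge[OF assms] by (intro nn_integral_mono) (simp add: h \<alpha>_def \<beta>_def A_def B_def)
  finally show "ennreal (1 / u * (p * (ln u - 2 - ln 2))) \<le> \<dots>" .
qed

lemma tail_risk21_tendsto_0: "((\<lambda>u. tail_risk M (tail_Z M X2 u) (tail_Z M e1 u)) \<longlongrightarrow> 0) at_top"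
proof (rule tendsto_sandwich[where f = "\<lambda>_. 0"])
  define K where "K = (c + 1 + 1 / (1 - exp (- 1))) / c"
  have "0 \<le> K"
    using c_pos by (simp add: K_def)
  show "\<forall>\<^sub>F u in at_top. tail_risk M (tail_Z M X2 u) (tail_Z M e1 u) \<le> ennreal (K / (u - 1))"
    using eventually_gt_at_top[of 1]
  proof eventually_elim
    case (elim u)
    have "tail_risk M (tail_Z M X2 u) (tail_Z M e1 u) \<le> ennreal (K / frechet_return_level u)"
      using tail_risk21_le[OF elim] by (simp add: K_def)
    also have "K / frechet_return_level u \<le> K / (u - 1)"
      using frechet_return_level_ge[OF elim] \<open>0 \<le> K\<close> elim by (intro divide_left_mono) auto
    finally show ?case
      by (simp add: ennreal_leI)
  qed
  have "((\<lambda>u. K / (u - 1)) \<longlongrightarrow> 0) at_top"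
    by real_asymp
  then show "((\<lambda>u. ennreal (K / (u - 1))) \<longlongrightarrow> 0) at_top"
    using tendsto_ennrealI by fastforce
qed auto

lemma tail_risk12_tendsto_top: "((\<lambda>u. tail_risk M (tail_Z M e1 u) (tail_Z M X2 u)) \<longlongrightarrow> top) at_top"
  unfolding tendsto_top_iff_ennreal
proof (intro allI impI)
  fix l :: real
  assume "0 \<le> l"
  define p where "p = min c (exp (- 2)) / (4 * (c + 1))"
  have "0 < p"
    using c_pos by (simp add: p_def)
  then have "LIM u at_top. p * (ln u - 2 - ln 2) :> at_top"
    by (intro filterlim_tendsto_pos_mult_at_top[OF tendsto_const \<open>0 < p\<close>]) real_asymp
  then have "\<forall>\<^sub>F u in at_top. ennreal l < ennreal (p * (ln u - 2 - ln 2))"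
    using \<open>0 \<le> l\<close> unfolding ennreal_tendsto_top_eq_at_top[symmetric] tendsto_top_iff_ennreal by blast
  moreover have "\<forall>\<^sub>F u in at_top.
      ennreal (p * (ln u - 2 - ln 2)) \<le> tail_risk M (tail_Z M e1 u) (tail_Z M X2 u)"
    using eventually_ge_at_top[of 2] by eventually_elim (unfold p_def, rule tail_risk12_ge)
  ultimately show "\<forall>\<^sub>F u in at_top. ennreal l < tail_risk M (tail_Z M e1 u) (tail_Z M X2 u)"
    by eventually_elim (rule less_le_trans)
qed

end

theorem theorem1:
  fixes M :: "'a measure" and e1 e2 :: "'a \<Rightarrow> real" and c :: real
    and X1 X2 :: "'a \<Rightarrow> real" and R21 R12 :: "real \<Rightarrow> ennreal"
  assumes "prob_space M"
    and "e1 \<in> borel_measurable M" and "e2 \<in> borel_measurable M"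
    and "prob_space.indep_var M borel e1 borel e2"
    and "\<forall>x>0. measure M {\<omega> \<in> space M. e1 \<omega> \<le> x} = exp (- 1 / x)"
    and "\<forall>x>0. measure M {\<omega> \<in> space M. e2 \<omega> \<le> x} = exp (- 1 / x)"
    and "c > 0"
  defines "X1 \<equiv> e1"
    and "X2 \<equiv> (\<lambda>\<omega>. max (c * X1 \<omega>) (e2 \<omega>))"
    and "R21 \<equiv> (\<lambda>u. tail_risk M (tail_Z M X2 u) (tail_Z M X1 u))"
    and "R12 \<equiv> (\<lambda>u. tail_risk M (tail_Z M X1 u) (tail_Z M X2 u))"
  shows "(R21 \<longlongrightarrow> 0) at_top
         \<and> Liminf at_top R12 \<ge> ennreal (ln 2 / (c + 1))
         \<and> (\<forall>\<^sub>F u in at_top. R21 u < R12 u)"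
proof -
  have model: "frechet_max_model M e1 e2 c"
    using assms(1-7) by (simp add: frechet_max_model_def frechet_max_model_axioms_def)
  have "X2 = frechet_max_model.X2 e1 e2 c"
    by (simp add: frechet_max_model.X2_def[OF model] X2_def X1_def)
  then have R21: "(R21 \<longlongrightarrow> 0) at_top" and R12: "(R12 \<longlongrightarrow> top) at_top"
    using frechet_max_model.tail_risk21_tendsto_0[OF model]
      frechet_max_model.tail_risk12_tendsto_top[OF model]
    by (simp_all add: R21_def R12_def X1_def)
  then have "Liminf at_top R12 = top"
    by (intro lim_imp_Liminf) simp_all
  moreover have "\<forall>\<^sub>F u in at_top. R21 u < R12 u"
    using order_tendstoD(2)[OF R21 zero_less_one] order_tendstoD(1)[OF R12 ennreal_one_less_top]
    by eventually_elim (rule less_trans)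
  ultimately show ?thesis
    using R21 by simp
qed

end
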